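(* Let $c>0$ be constant. There exist constants $b_1,b_2,b_3>0$ depending only on $c$ such that for all sufficiently large $n$, at every time $t$ with $Z^t\ge1$, conditional on $(x^t,\lambda^t)$: $\Pr[\bar A]\le e^{-b_1\lambda^t}$ and $e^{-b_2\lambda^t Z^t/n}\le\Pr[\bar B]\le e^{-b_3\lambda^t Z^t/n}$. Moreover $\Pr[f^t(x^{t+1})\le f^t(x^t)]\le \exp\!\big(-\tfrac12 c e^{-c}\lfloor\lambda^t\rceil Z^t/n\big)$.
   Context: Consider the SA-$(1,\lambda)$-EA on a dynamic monotone function: a function $f:\{0,1\}^n\to\mathbb R$ is monotone if $f(x)>f(y)$ whenever $x\ne y$ and $x_i\ge y_i$ for all $i$; $(f^t)_{t\ge0}$ is a sequence of monotone functions, $f^t$ possibly chosen adversarially depending on $x^t$. The algorithm (with constants $c>0$, $s>0$, $F>1$) maintains $x^t\in\{0,1\}^n$, real $\lambda^t\ge1$; in generation $t$ it creates $\lfloor\lambda^t\rceil$ (nearest integer) offspring $y^{t,j}$, each independently by flipping every bit of $x^t$ independently with probability $c/n$; $x^{t+1}$ is an offspring maximizing $f^t$ (ties uniformly at random); $\lambda^{t+1}=\max\{1,\lambda^t/F\}$ if $f^t(x^{t+1})>f^t(x^t)$, else $\lambda^{t+1}=F^{1/s}\lambda^t$. $Z^t$ is the number of zero-bits of $x^t$. $A$ is the event that some offspring $y^{t,j}$ flips no one-bit of $x^t$ (i.e. $\{i:x^t_i=1\}\subseteq\{i:y^{t,j}_i=1\}$); $B$ is the event that some offspring flips at least one zero-bit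 of $x^t$ (there are $j,i$ with $x^t_i=0$, $y^{t,j}_i=1$). *)

theory Defs
  imports "HOL-Probability.Probability"
begin

text \<open>Bit strings of length n are lists of booleans (True = one-bit).\<close>

primrec mutate :: "real \<Rightarrow> bool list \<Rightarrow> bool list pmf" where
  "mutate p [] = return_pmf []"
| "mutate p (b # bs) =
     bind_pmf (bernoulli_pmf p)
       (\<lambda>fl. map_pmf (\<lambda>r. (if fl then \<not> b else b) # r) (mutate p bs))"

primrec offspring :: "real \<Rightarrow> bool list \<Rightarrow> nat \<Rightarrow> bool list list pmf" where
  "offspring p x 0 = return_pmf []"
| "offspring p x (Suc k) =
     bind_pmf (mutate p x) (\<lambda>y. map_pmf (\<lambda>ys. y # ys) (offspring p x k))"

definition select_best :: "(bool list \<Rightarrow> real) \<Rightarrow> bool list list \<Rightarrow> bool list pmf" where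
  "select_best f ys = pmf_of_set {y \<in> set ys. \<forall>z \<in> set ys. f z \<le> f y}"

definition num_offspring :: "real \<Rightarrow> nat" where
  "num_offspring lam = nat (round lam)"

text \<open>Distribution of the next parent x^{t+1}, given x^t = x, lambda^t = lam, f^t = f.\<close>
definition next_parent ::
  "real \<Rightarrow> nat \<Rightarrow> (bool list \<Rightarrow> real) \<Rightarrow> bool list \<Rightarrow> real \<Rightarrow> bool list pmf" where
  "next_parent c n f x lam =
     bind_pmf (offspring (c / real n) x (num_offspring lam)) (select_best f)"

definition monotone_bitfun :: "nat \<Rightarrow> (bool list \<Rightarrow> real) \<Rightarrow> bool" where
  "monotone_bitfun n f \<longleftrightarrow>
     (\<forall>x y. length x = n \<longrightarrow> length y = n \<longrightarrow> x \<noteq> y \<longrightarrow>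
        (\<forall>i<n. y ! i \<longrightarrow> x ! i) \<longrightarrow> f x > f y)"

definition zeros :: "nat \<Rightarrow> bool list \<Rightarrow> nat" where
  "zeros n x = card {i. i < n \<and> \<not> x ! i}"

definition event_A :: "nat \<Rightarrow> bool list \<Rightarrow> bool list list set" where
  "event_A n x = {ys. \<exists>y \<in> set ys. \<forall>i<n. x ! i \<longrightarrow> y ! i}"

definition event_B :: "nat \<Rightarrow> bool list \<Rightarrow> bool list list set" where
  "event_B n x = {ys. \<exists>y \<in> set ys. \<exists>i<n. \<not> x ! i \<and> y ! i}"

end

theory Submission
  imports Defs
begin

text \<open>
  With mutation rate \<open>p = c/n\<close>, one offspring leaves a fixed set of \<open>m\<close> positions untouched with
  probability exactly \<open>(1 - p)^m\<close>, and the offspring are independent, so the probabilities of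
  \<open>\<not>A\<close> and \<open>\<not>B\<close> are \<open>(1 - (1-p)^{n-Z})^k\<close> and \<open>(1-p)^{Zk}\<close> for \<open>k = \<lfloor>\<lambda>\<rceil> \<in> [\<lambda>/2, 3\<lambda>/2]\<close>;
  with \<open>e^{-2p} \<le> 1 - p \<le> e^{-p}\<close> these become exponentials. For the last bound, an offspring
  that flips no one-bit but some zero-bit is strictly better than the parent by monotonicity,
  so selection can only fail to improve if no offspring is of this kind. A single offspring is
  of this kind with probability \<open>(1-p)^{n-Z} - (1-p)^n \<ge> p Z (1-p)^n \<ge> p Z e^{-c}/2\<close>.
\<close>

lemma measure_bind_pmf:
  "measure_pmf.prob (bind_pmf M f) A = measure_pmf.expectation M (\<lambda>x. measure_pmf.prob (f x) A)"
proof -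
  have "integrable (measure_pmf M) (\<lambda>x. measure_pmf.prob (f x) A)"
    by (rule measure_pmf.integrable_const_bound[where B=1]) auto
  moreover have "emeasure (bind_pmf M f) A = (\<integral>\<^sup>+x. ennreal (measure_pmf.prob (f x) A) \<partial>M)"
    unfolding emeasure_bind_pmf by (simp add: measure_pmf.emeasure_eq_measure)
  ultimately show ?thesis
    by (simp add: measure_pmf.emeasure_eq_measure nn_integral_eq_integral)
qed

lemma measure_pmf_Compl: "measure_pmf.prob M (- A) = 1 - measure_pmf.prob M A"
  using measure_pmf.prob_compl[of A M] by (simp add: Compl_eq_Diff_UNIV)

lemma card_less_Suc_filter:
  "card {i. i < Suc n \<and> P i} = (if P 0 then 1 else 0) + card {i. i < n \<and> P (Suc i)}"
proof -
  have "{i. i < Suc n \<and> P i} = (if P 0 then {0} else {}) \<union> Suc ` {i. i < n \<and> P (Suc i)}"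
    by (auto simp: less_Suc_eq_0_disj)
  moreover have "card (Suc ` {i. i < n \<and> P (Suc i)}) = card {i. i < n \<and> P (Suc i)}"
    by (rule card_image) auto
  ultimately show ?thesis by auto
qed

lemma card_filter_add_card_filter_not: "card {i. i < n \<and> P i} + card {i. i < n \<and> \<not> P i} = n"
proof -
  have "{i. i < n \<and> P i} \<union> {i. i < n \<and> \<not> P i} = {..<n}" by auto
  moreover have "card ({i. i < n \<and> P i} \<union> {i. i < n \<and> \<not> P i})
      = card {i. i < n \<and> P i} + card {i. i < n \<and> \<not> P i}"
    by (rule card_Un_disjoint) auto
  ultimately show ?thesis by simp
qed

lemma length_mutate: "y \<in> set_pmf (mutate p x) \<Longrightarrow> length y = length x"
  by (induction x arbitrary: y) auto

lemma set_pmf_offspring: "ys \<in> set_pmf (offspring p x k) \<Longrightarrow> y \<in> set ys \<Longrightarrow> y \<in> set_pmf (mutate p x)"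
  by (induction k arbitrary: ys) auto

lemma prob_mutate_keeps:
  assumes "0 \<le> p" "p \<le> 1"
  shows "measure_pmf.prob (mutate p x) {y. \<forall>i<length x. P i \<longrightarrow> y ! i = x ! i}
         = (1 - p) ^ card {i. i < length x \<and> P i}"
  using assms
proof (induction x arbitrary: P)
  case Nil
  then show ?case by simp
next
  case (Cons b bs)
  let ?E = "{y. \<forall>i<length (b # bs). P i \<longrightarrow> y ! i = (b # bs) ! i}"
  let ?F = "{y. \<forall>i<length bs. P (Suc i) \<longrightarrow> y ! i = bs ! i}"
  have preimage: "(\<lambda>r. (if fl then \<not> b else b) # r) -` ?E = (if P 0 \<and> fl then {} else ?F)" for fl
    by (auto simp: less_Suc_eq_0_disj)
  have "measure_pmf.prob (mutate p (b # bs)) ?E =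
     measure_pmf.expectation (bernoulli_pmf p) (\<lambda>fl. (if P 0 \<and> fl then 0 else 1) * measure_pmf.prob (mutate p bs) ?F)"
    unfolding mutate.simps measure_bind_pmf measure_map_pmf preimage
    by (rule Bochner_Integration.integral_cong) auto
  also have "\<dots> = (if P 0 then 1 - p else 1) * measure_pmf.prob (mutate p bs) ?F"
    using Cons.prems by auto
  also have "\<dots> = (1 - p) ^ card {i. i < length (b # bs) \<and> P i}"
    using Cons.IH[of "\<lambda>i. P (Suc i)"] Cons.prems by (simp add: card_less_Suc_filter)
  finally show ?case .
qed

lemma prob_offspring_all:
  "measure_pmf.prob (offspring p x k) {ys. \<forall>y\<in>set ys. y \<in> Q} = measure_pmf.prob (mutate p x) Q ^ k"
proof (induction k)
  case 0
  then show ?case by simp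
next
  case (Suc k)
  let ?S = "{ys. \<forall>y\<in>set ys. y \<in> Q}"
  have preimage: "(\<lambda>ys. y # ys) -` ?S = (if y \<in> Q then ?S else {})" for y
    by auto
  have "measure_pmf.prob (offspring p x (Suc k)) ?S
     = measure_pmf.expectation (mutate p x) (\<lambda>y. indicator Q y * measure_pmf.prob (offspring p x k) ?S)"
    unfolding offspring.simps measure_bind_pmf measure_map_pmf preimage
    by (rule Bochner_Integration.integral_cong) (auto simp: indicator_def)
  then show ?case
    using Suc by simp
qed

lemma prob_select_best_le_eq_0:
  assumes "y \<in> set ys" "f y > v"
  shows "measure_pmf.prob (select_best f ys) {x'. f x' \<le> v} = 0"
proof -
  let ?T = "{y \<in> set ys. \<forall>z \<in> set ys. f z \<le> f y}"
  have "Max (f ` set ys) \<in> f ` set ys"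
    using assms(1) by (intro Max_in) auto
  then obtain t where "t \<in> set ys" "f t = Max (f ` set ys)"
    by auto
  then have "t \<in> ?T" by auto
  moreover have "?T \<inter> {x'. f x' \<le> v} = {}"
    using assms by force
  ultimately show ?thesis
    unfolding select_best_def by (subst measure_pmf_of_set) auto
qed

lemma prob_select_best_le:
  assumes "\<And>ys y. ys \<in> set_pmf M \<Longrightarrow> y \<in> set ys \<Longrightarrow> y \<in> G \<Longrightarrow> f y > v"
  shows "measure_pmf.prob (bind_pmf M (select_best f)) {x'. f x' \<le> v}
         \<le> measure_pmf.prob M {ys. \<forall>y\<in>set ys. y \<in> - G}"
proof -
  let ?S = "{ys. \<forall>y\<in>set ys. y \<in> - G}"
  have "measure_pmf.expectation M (\<lambda>ys. measure_pmf.prob (select_best f ys) {x'. f x' \<le> v})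
        \<le> measure_pmf.expectation M (indicator ?S)"
  proof (rule integral_mono_AE)
    show "integrable (measure_pmf M) (\<lambda>ys. measure_pmf.prob (select_best f ys) {x'. f x' \<le> v})"
      by (rule measure_pmf.integrable_const_bound[where B=1]) auto
    show "integrable (measure_pmf M) (indicator ?S :: _ \<Rightarrow> real)"
      by (rule measure_pmf.integrable_const_bound[where B=1]) (auto simp: indicator_def)
    show "AE ys in measure_pmf M. measure_pmf.prob (select_best f ys) {x'. f x' \<le> v} \<le> indicator ?S ys"
      unfolding AE_measure_pmf_iff
      using assms prob_select_best_le_eq_0 by (fastforce simp: indicator_def)
  qed
  then show ?thesis
    by (simp add: measure_bind_pmf)
qed

lemma power_diff_power_add_ge:
  fixes q :: real
  assumes "0 \<le> q" "q \<le> 1"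
  shows "real m * (1 - q) * q ^ (l + m) \<le> q ^ l - q ^ (l + m)"
proof -
  have "(\<Sum>i<m. q ^ m) \<le> (\<Sum>i<m. q ^ i)"
    using assms by (intro sum_mono power_decreasing) auto
  then have "(1 - q) * (\<Sum>i<m. q ^ m) \<le> (1 - q) * (\<Sum>i<m. q ^ i)"
    using assms by (intro mult_left_mono) auto
  then have "real m * (1 - q) * q ^ m \<le> 1 - q ^ m"
    by (simp add: one_diff_power_eq algebra_simps)
  then have "q ^ l * (real m * (1 - q) * q ^ m) \<le> q ^ l * (1 - q ^ m)"
    using assms by (intro mult_left_mono) auto
  then show ?thesis
    by (simp add: power_add algebra_simps)
qed

lemma one_minus_power_le_exp:
  fixes a :: real
  assumes "a \<le> 1"
  shows "(1 - a) ^ k \<le> exp (- a * real k)"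
proof -
  have "(1 - a) ^ k \<le> exp (- a) ^ k"
    using assms exp_ge_add_one_self[of "- a"] by (intro power_mono) auto
  then show ?thesis
    by (simp add: exp_of_nat_mult[symmetric] mult.commute)
qed

lemma exp_half_le_2: "exp (1/2 :: real) \<le> 2"
proof -
  have "exp (1/2 :: real) ^ 2 = exp 1"
    by (simp add: exp_of_nat_mult[symmetric])
  then have "exp (1/2 :: real) ^ 2 \<le> 2 ^ 2"
    using exp_le by simp
  then show ?thesis
    by (rule power2_le_imp_le) simp
qed

lemma exp_neg_two_le_one_minus:
  fixes p :: real
  assumes "0 \<le> p" "p \<le> 1/2"
  shows "exp (- 2 * p) \<le> 1 - p"
proof -
  have "- 2 * p \<le> - p - 2 * p\<^sup>2"
    using assms mult_left_mono[of "2 * p" 1 p] by (simp add: power2_eq_square)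
  also have "\<dots> \<le> ln (1 - p)"
    by (rule ln_one_minus_pos_lower_bound[OF assms])
  finally have "exp (- 2 * p) \<le> exp (ln (1 - p))"
    by (simp only: exp_le_cancel_iff)
  then show ?thesis
    using assms by simp
qed

lemma exp_neg_half_le_one_minus_power:
  fixes c :: real
  assumes "c > 0" "4 * c\<^sup>2 \<le> real n" "2 * c \<le> real n"
  shows "exp (- c) / 2 \<le> (1 - c / n) ^ n"
proof -
  define p where "p = c / n"
  have n: "real n > 0" using assms by (smt (verit) zero_less_power2)
  have p: "0 \<le> p" "p \<le> 1/2" using assms n by (auto simp: p_def field_simps)
  have "- c - 1/2 \<le> - c - 2 * c\<^sup>2 / n"
    using assms n by (simp add: field_simps)
  also have "\<dots> = real n * (- p - 2 * p\<^sup>2)"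
    using n by (simp add: p_def power2_eq_square field_simps)
  also have "\<dots> \<le> real n * ln (1 - p)"
    using ln_one_minus_pos_lower_bound[OF p] by (intro mult_left_mono) auto
  finally have "- c - 1/2 \<le> real n * ln (1 - p)" .
  moreover have "exp (real n * ln (1 - p)) = (1 - p) ^ n"
    using p by (simp add: exp_of_nat_mult)
  ultimately have "exp (- c - 1/2) \<le> (1 - p) ^ n"
    by (metis exp_le_cancel_iff)
  moreover have "exp (- c) / 2 \<le> exp (- c) / exp (1/2)"
    using exp_half_le_2 by (intro divide_left_mono) auto
  then have "exp (- c) / 2 \<le> exp (- c - 1/2)"
    by (simp add: exp_diff)
  ultimately show ?thesis
    by (simp add: p_def)
qed

lemma num_offspring_bounds:
  assumes "lam \<ge> 1"
  shows "lam / 2 \<le> real (num_offspring lam)" "real (num_offspring lam) \<le> 3 / 2 * lam"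
proof -
  have "lam - 1/2 \<le> of_int (round lam)" "of_int (round lam) \<le> lam + 1/2"
    by (rule of_int_round_ge, rule of_int_round_le)
  moreover have "real (num_offspring lam) = of_int (round lam)"
    using calculation assms by (simp add: num_offspring_def)
  ultimately show "lam / 2 \<le> real (num_offspring lam)" "real (num_offspring lam) \<le> 3 / 2 * lam"
    using assms by auto
qed

locale generation =
  fixes c :: real and n :: nat and x :: "bool list"
  assumes c_pos: "c > 0"
    and n_large: "4 * c\<^sup>2 + 2 * c \<le> real n"
      \<comment> \<open>gives \<open>p \<le> 1/2\<close> and \<open>2 c\<^sup>2/n \<le> 1/2\<close>, which is all the estimates need\<close>
    and length_x: "length x = n"
begin

abbreviation rate :: real where "rate \<equiv> c / real n"

abbreviation ones :: nat where "ones \<equiv> card {i. i < n \<and> x ! i}"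

lemma n_pos: "real n > 0"
  using c_pos n_large by (smt (verit) zero_le_power2)

lemma rate_bounds: "0 \<le> rate" "rate \<le> 1/2"
proof -
  have "2 * c \<le> real n"
    using n_large by (smt (verit) zero_le_power2)
  then show "0 \<le> rate" "rate \<le> 1/2"
    using c_pos n_pos by (auto simp: field_simps)
qed

lemma ones_add_zeros: "ones + zeros n x = n"
  unfolding zeros_def by (rule card_filter_add_card_filter_not)

lemma one_minus_rate_bounds: "exp (- 2 * rate) \<le> 1 - rate" "1 - rate \<le> exp (- rate)"
  using exp_neg_two_le_one_minus[OF rate_bounds] exp_ge_add_one_self[of "- rate"] by auto

lemma exp_neg_two_c_le_power: "exp (- 2 * c) \<le> (1 - rate) ^ n"
proof -
  have "exp (- 2 * c) = exp (- 2 * rate) ^ n"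
    using n_pos by (simp add: exp_of_nat_mult[symmetric])
  also have "\<dots> \<le> (1 - rate) ^ n"
    using one_minus_rate_bounds(1) by (intro power_mono) auto
  finally show ?thesis .
qed

lemma exp_neg_half_c_le_power: "exp (- c) / 2 \<le> (1 - rate) ^ n"
  using c_pos n_large by (intro exp_neg_half_le_one_minus_power) (smt (verit) zero_le_power2)+

lemma prob_mutate_keeps_filter:
  "measure_pmf.prob (mutate rate x) {y. \<forall>i<length x. P i \<longrightarrow> y ! i = x ! i}
     = (1 - rate) ^ card {i. i < n \<and> P i}"
  using prob_mutate_keeps[of rate x P] rate_bounds length_x by simp

lemma prob_not_event_A_le:
  assumes "lam \<ge> 1"
  shows "measure_pmf.prob (offspring rate x (num_offspring lam)) (- event_A n x)
           \<le> exp (- (exp (- 2 * c) / 2) * lam)"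
proof -
  let ?k = "num_offspring lam" and ?q = "1 - rate"
  have "- event_A n x = {ys. \<forall>y\<in>set ys. y \<in> - {y. \<forall>i<length x. x ! i \<longrightarrow> y ! i = x ! i}}"
    by (auto simp: event_A_def length_x)
  then have "measure_pmf.prob (offspring rate x ?k) (- event_A n x) = (1 - ?q ^ ones) ^ ?k"
    by (simp only: prob_offspring_all measure_pmf_Compl prob_mutate_keeps_filter)
  also have "\<dots> \<le> (1 - exp (- 2 * c)) ^ ?k"
  proof (rule power_mono)
    have "?q ^ n \<le> ?q ^ ones"
      using ones_add_zeros rate_bounds by (intro power_decreasing; linarith)
    then show "1 - ?q ^ ones \<le> 1 - exp (- 2 * c)"
      using exp_neg_two_c_le_power by linarith
    show "0 \<le> 1 - ?q ^ ones"
      using rate_bounds by (intro diff_ge_0_iff_ge[THEN iffD2] power_le_one; linarith)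
  qed
  also have "\<dots> \<le> exp (- exp (- 2 * c) * real ?k)"
    using c_pos by (intro one_minus_power_le_exp) simp
  also have "\<dots> \<le> exp (- (exp (- 2 * c) / 2) * lam)"
    using num_offspring_bounds(1)[OF assms] by simp
  finally show ?thesis .
qed

lemma prob_not_event_B_eq:
  "measure_pmf.prob (offspring rate x k) (- event_B n x) = (1 - rate) ^ (zeros n x * k)"
proof -
  have "- event_B n x = {ys. \<forall>y\<in>set ys. y \<in> {y. \<forall>i<length x. \<not> x ! i \<longrightarrow> y ! i = x ! i}}"
    by (auto simp: event_B_def length_x)
  then show ?thesis
    by (simp only: prob_offspring_all prob_mutate_keeps_filter zeros_def power_mult)
qed

lemma prob_not_event_B_ge:
  assumes "lam \<ge> 1"
  shows "exp (- (3 * c) * lam * real (zeros n x) / real n)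
           \<le> measure_pmf.prob (offspring rate x (num_offspring lam)) (- event_B n x)"
proof -
  let ?m = "zeros n x * num_offspring lam"
  have "real ?m \<le> real (zeros n x) * (3 / 2 * lam)"
    unfolding of_nat_mult using num_offspring_bounds(2)[OF assms] by (intro mult_left_mono) auto
  then have "real ?m * (2 * rate) \<le> real (zeros n x) * (3 / 2 * lam) * (2 * rate)"
    using rate_bounds by (intro mult_right_mono) auto
  then have "exp (- (3 * c) * lam * real (zeros n x) / real n) \<le> exp (- 2 * rate) ^ ?m"
    by (simp add: exp_of_nat_mult[symmetric])
  also have "\<dots> \<le> (1 - rate) ^ ?m"
    using one_minus_rate_bounds(1) by (intro power_mono) auto
  finally show ?thesis
    by (simp add: prob_not_event_B_eq)
qed

lemma prob_not_event_B_le: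
  assumes "lam \<ge> 1"
  shows "measure_pmf.prob (offspring rate x (num_offspring lam)) (- event_B n x)
           \<le> exp (- (c / 2) * lam * real (zeros n x) / real n)"
proof -
  let ?m = "zeros n x * num_offspring lam"
  have "(1 - rate) ^ ?m \<le> exp (- rate) ^ ?m"
    using one_minus_rate_bounds(2) rate_bounds by (intro power_mono; linarith)
  also have "\<dots> \<le> exp (- (c / 2) * lam * real (zeros n x) / real n)"
  proof -
    have "real (zeros n x) * (lam / 2) \<le> real ?m"
      unfolding of_nat_mult using num_offspring_bounds(1)[OF assms] by (intro mult_left_mono) auto
    then have "real (zeros n x) * (lam / 2) * rate \<le> real ?m * rate"
      using rate_bounds by (intro mult_right_mono) auto
    then show ?thesis
      by (simp add: exp_of_nat_mult[symmetric] mult_ac)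
  qed
  finally show ?thesis
    by (simp add: prob_not_event_B_eq)
qed

lemma prob_no_improvement_le:
  assumes "lam \<ge> 1" and "monotone_bitfun n f"
  shows "measure_pmf.prob (next_parent c n f x lam) {x'. f x' \<le> f x}
           \<le> exp (- (1/2) * c * exp (- c) * real (num_offspring lam) * real (zeros n x) / real n)"
proof -
  let ?k = "num_offspring lam" and ?q = "1 - rate"
  let ?keeps_ones = "{y. \<forall>i<length x. x ! i \<longrightarrow> y ! i = x ! i}"
  let ?keeps_all = "{y. \<forall>i<length x. True \<longrightarrow> y ! i = x ! i}"
  define G where "G = ?keeps_ones - ?keeps_all"
  define a where "a = rate * real (zeros n x) * exp (- c) / 2"
  have improves: "f y > f x" if "ys \<in> set_pmf (offspring rate x ?k)" "y \<in> set ys" "y \<in> G" for ys y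
  proof -
    have "length y = n"
      using length_mutate set_pmf_offspring that(1,2) length_x by metis
    moreover have "y \<noteq> x" "\<forall>i<n. x ! i \<longrightarrow> y ! i"
      using that(3) length_x by (auto simp: G_def)
    ultimately show ?thesis
      using assms(2) length_x unfolding monotone_bitfun_def by blast
  qed
  have prob_G: "measure_pmf.prob (mutate rate x) G = ?q ^ ones - ?q ^ n"
    using prob_mutate_keeps_filter[of "\<lambda>i. x ! i"] prob_mutate_keeps_filter[of "\<lambda>_. True"]
    unfolding G_def by (subst measure_pmf.finite_measure_Diff) auto
  have "a \<le> rate * real (zeros n x) * ?q ^ n"
    unfolding a_def using exp_neg_half_c_le_power rate_bounds
    by (simp only: times_divide_eq_right[symmetric] mult.assoc) (intro mult_left_mono; simp)
  also have "\<dots> \<le> ?q ^ ones - ?q ^ n"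
    using power_diff_power_add_ge[where q = ?q and l = ones and m = "zeros n x"] ones_add_zeros rate_bounds
    by (simp add: mult_ac)
  finally have a_le: "a \<le> ?q ^ ones - ?q ^ n" .
  have q_powers: "0 \<le> ?q ^ n" "?q ^ ones \<le> 1"
    using rate_bounds by (intro zero_le_power power_le_one; linarith)+
  have "measure_pmf.prob (next_parent c n f x lam) {x'. f x' \<le> f x}
          \<le> measure_pmf.prob (offspring rate x ?k) {ys. \<forall>y\<in>set ys. y \<in> - G}"
    unfolding next_parent_def by (rule prob_select_best_le) (rule improves)
  also have "\<dots> = (1 - (?q ^ ones - ?q ^ n)) ^ ?k"
    by (simp only: prob_offspring_all measure_pmf_Compl prob_G)
  also have "\<dots> \<le> (1 - a) ^ ?k"
    using a_le q_powers by (intro power_mono) auto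
  also have "\<dots> \<le> exp (- a * real ?k)"
    using a_le q_powers by (intro one_minus_power_le_exp) auto
  also have "\<dots> = exp (- (1/2) * c * exp (- c) * real ?k * real (zeros n x) / real n)"
    by (simp add: a_def mult_ac)
  finally show ?thesis .
qed

lemma one_generation_bounds:
  assumes "lam \<ge> 1" and "monotone_bitfun n f"
  shows "(let P = offspring (c / real n) x (num_offspring lam) in
          measure_pmf.prob P (- event_A n x) \<le> exp (- (exp (- 2 * c) / 2) * lam)
        \<and> exp (- (3 * c) * lam * real (zeros n x) / real n) \<le> measure_pmf.prob P (- event_B n x)
        \<and> measure_pmf.prob P (- event_B n x) \<le> exp (- (c / 2) * lam * real (zeros n x) / real n))
       \<and> measure_pmf.prob (next_parent c n f x lam) {x'. f x' \<le> f x}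
           \<le> exp (- (1/2) * c * exp (- c) * real (num_offspring lam) * real (zeros n x) / real n)"
  unfolding Let_def
  using prob_not_event_A_le prob_not_event_B_ge prob_not_event_B_le prob_no_improvement_le assms
  by blast

end

theorem mainTheorem7:
  fixes c :: real
  assumes "c > 0"
  shows "\<exists>b1 b2 b3 :: real. b1 > 0 \<and> b2 > 0 \<and> b3 > 0 \<and>
    (\<exists>N. \<forall>n \<ge> N. \<forall>(x :: bool list) (lam :: real) (f :: bool list \<Rightarrow> real).
       length x = n \<longrightarrow> zeros n x \<ge> 1 \<longrightarrow> lam \<ge> 1 \<longrightarrow> monotone_bitfun n f \<longrightarrow>
       (let P = offspring (c / real n) x (num_offspring lam) in
          measure_pmf.prob P (- event_A n x) \<le> exp (- b1 * lam)
        \<and> exp (- b2 * lam * real (zeros n x) / real n) \<le> measure_pmf.prob P (- event_B n x)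
        \<and> measure_pmf.prob P (- event_B n x) \<le> exp (- b3 * lam * real (zeros n x) / real n))
       \<and> measure_pmf.prob (next_parent c n f x lam) {x'. f x' \<le> f x}
           \<le> exp (- (1/2) * c * exp (- c) * real (num_offspring lam) * real (zeros n x) / real n))"
proof -
  define N where "N = nat \<lceil>4 * c\<^sup>2 + 2 * c\<rceil>"
  have large: "generation c n x" if "n \<ge> N" "length x = n" for n x
    using assms that unfolding N_def by unfold_locales linarith+
  show ?thesis
    by (rule exI[of _ "exp (- 2 * c) / 2"], rule exI[of _ "3 * c"], rule exI[of _ "c / 2"],
        intro conjI exI[of _ N] allI impI)
      (use assms in \<open>(simp; fail)+\<close>, (use large generation.one_generation_bounds in blast)+)
qed

end
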